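(* Fix $K \ge 2$. Let a strategy for stochastic $K$-armed bandits admit a scale-free distribution-free regret bound $\Phi_{\mathrm{free}} : \mathbb{N} \to [0,+\infty)$, i.e., for all real numbers $m < M$, without knowing $m$ or $M$, it ensures $R_T(\underline\nu) \le (M-m)\,\Phi_{\mathrm{free}}(T)$ for every bandit problem $\underline\nu$ in $\mathcal{D}_{m,M}$ and every $T \ge 1$. Assume moreover that $\Phi_{\mathrm{free}}(T) = o(T)$ as $T \to \infty$. Then for every bandit problem $\underline\nu = (\nu_a)_{a\in[K]}$ in $\mathcal{D}_{-,+}$, \[ \liminf_{T\to\infty} \frac{R_T(\underline\nu)}{T/\Phi_{\mathrm{free}}(T)} \ \ge\ \frac{1}{16}\sum_{a=1}^K \Delta_a . \]
   Context: Stochastic $K$-armed bandit: each arm $a \in [K]=\{1,\dots,K\}$ has a distribution $\nu_a$ on $\mathbb{R}$ with a first moment; $\mu_a$ is its mean, $\mu^\star = \max_a \mu_a$, and $\Delta_a = \mu^\star - \mu_a$. At round $t \ge 1$ the player picks $A_t \in [K]$ as a measurable function of $(U_0, Z_1, U_1, \dots, Z_{t-1}, U_{t-1})$, where $U_0, U_1, \dots$ are i.i.d. uniform on $[0,1]$ and independent of everything else, and receives and observes $Z_t$ drawn from $\nu_{A_t}$ independently given $A_t$. The (expected) regret is $R_T(\underline\nu) = T\mu^\star - \mathbb{E}[\sum_{t=1}^T Z_t] = \sum_a \Delta_a\,\mathbb{E}[N_a(T)]$, where $N_a(T)$ is the number of pulls of arm $a$ in rounds $1,\dots,T$. For real $m<M$,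 $\mathcal{D}_{m,M}$ is the set of probability distributions supported on $[m,M]$, and $\mathcal{D}_{-,+} = \bigcup_{m<M} \mathcal{D}_{m,M}$ (bounded distributions with unknown range). A bandit problem in a model $\mathcal{D}$ is a vector $(\nu_a)_{a\in[K]}$ with each $\nu_a\in\mathcal{D}$. *)

theory Defs
  imports "HOL-Probability.Probability" "HOL-Library.Landau_Symbols"
begin

text \<open>Histories: h 0 = (0, U_0) and h s = (Z_s, U_s) for s \<ge> 1.
  Arms are 1..K.\<close>

definition HS :: "(nat \<Rightarrow> real \<times> real) measure" where
  "HS = PiM UNIV (\<lambda>_. borel)"

definition unif01 :: "real measure" where
  "unif01 = uniform_measure lborel {0..1}"

definition strategy :: "nat \<Rightarrow> (nat \<Rightarrow> (nat \<Rightarrow> real \<times> real) \<Rightarrow> nat) \<Rightarrow> bool" where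
  "strategy K \<pi> \<longleftrightarrow> (\<forall>t\<ge>1. \<pi> t \<in> HS \<rightarrow>\<^sub>M count_space UNIV
       \<and> (\<forall>h. \<pi> t h \<in> {1..K})
       \<and> (\<forall>h h'. (\<forall>s<t. h s = h' s) \<longrightarrow> \<pi> t h = \<pi> t h'))"

primrec hist_law :: "(nat \<Rightarrow> (nat \<Rightarrow> real \<times> real) \<Rightarrow> nat) \<Rightarrow> (nat \<Rightarrow> real measure)
    \<Rightarrow> nat \<Rightarrow> (nat \<Rightarrow> real \<times> real) measure" where
  "hist_law \<pi> \<nu> 0 = distr unif01 HS (\<lambda>u. (\<lambda>s. (0, if s = 0 then u else 0)))"
| "hist_law \<pi> \<nu> (Suc t) = hist_law \<pi> \<nu> t \<bind>
     (\<lambda>h. distr (\<nu> (\<pi> (Suc t) h) \<Otimes>\<^sub>M unif01) HS (\<lambda>zu. h(Suc t := zu)))"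

definition mean :: "real measure \<Rightarrow> real" where
  "mean P = (\<integral>x. x \<partial>P)"

definition best_mean :: "nat \<Rightarrow> (nat \<Rightarrow> real measure) \<Rightarrow> real" where
  "best_mean K \<nu> = Max ((\<lambda>a. mean (\<nu> a)) ` {1..K})"

definition gap :: "nat \<Rightarrow> (nat \<Rightarrow> real measure) \<Rightarrow> nat \<Rightarrow> real" where
  "gap K \<nu> a = best_mean K \<nu> - mean (\<nu> a)"

definition regret :: "nat \<Rightarrow> (nat \<Rightarrow> (nat \<Rightarrow> real \<times> real) \<Rightarrow> nat) \<Rightarrow> (nat \<Rightarrow> real measure)
    \<Rightarrow> nat \<Rightarrow> real" where
  "regret K \<pi> \<nu> T = real T * best_mean K \<nu>
     - (\<integral>h. (\<Sum>t\<in>{1..T}. fst (h t)) \<partial>(hist_law \<pi> \<nu> T))"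

definition dist_in :: "real \<Rightarrow> real \<Rightarrow> real measure \<Rightarrow> bool" where
  "dist_in m M P \<longleftrightarrow> prob_space P \<and> sets P = sets borel \<and> measure P {m..M} = 1"

definition bandit_in :: "real \<Rightarrow> real \<Rightarrow> nat \<Rightarrow> (nat \<Rightarrow> real measure) \<Rightarrow> bool" where
  "bandit_in m M K \<nu> \<longleftrightarrow> (\<forall>a\<in>{1..K}. dist_in m M (\<nu> a))"

definition bandit_bounded :: "nat \<Rightarrow> (nat \<Rightarrow> real measure) \<Rightarrow> bool" where
  "bandit_bounded K \<nu> \<longleftrightarrow> (\<exists>m M. m < M \<and> bandit_in m M K \<nu>)"

definition scale_free_bound :: "nat \<Rightarrow> (nat \<Rightarrow> (nat \<Rightarrow> real \<times> real) \<Rightarrow> nat) \<Rightarrow> (nat \<Rightarrow> real) \<Rightarrow> bool" where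
  "scale_free_bound K \<pi> \<Phi> \<longleftrightarrow> (\<forall>T. \<Phi> T \<ge> 0) \<and>
     (\<forall>m M \<nu> T. m < M \<longrightarrow> bandit_in m M K \<nu> \<longrightarrow> T \<ge> 1 \<longrightarrow>
        regret K \<pi> \<nu> T \<le> (M - m) * \<Phi> T)"

end

theory Submission
  imports Defs
begin

text \<open>
  Fix an arm \<open>a\<close> with expected number of pulls \<open>n = E N_a(T)\<close> and replace \<open>\<nu>_a\<close> by the mixture
  \<open>\<nu>'_a = (1 - \<epsilon>) \<nu>_a + \<epsilon> \<delta>_x\<close> with \<open>x\<close> large. In the new problem \<open>a\<close> is optimal with a margin
  \<open>\<epsilon> x + O(1)\<close> over every other arm, while its range only grows to \<open>[m, x]\<close>. Since \<open>\<nu>'_a \<ge> (1 - \<epsilon>) \<nu>_a\<close>,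
  the law of the history under \<open>\<nu>'\<close> dominates \<open>(1 - \<epsilon>)^(N_a(T))\<close> times its law under \<open>\<nu>\<close>, so
  the other arms are still pulled \<open>E'[T - N_a(T)] \<ge> T - n - \<epsilon> T n\<close> times in expectation. Comparing
  the resulting regret, of order \<open>\<epsilon> x (T - n - \<epsilon> T n)\<close>, with the scale-free bound \<open>(x - m) \<Phi>(T)\<close> and
  letting \<open>x \<rightarrow> \<infinity>\<close> gives \<open>\<epsilon> (T - n - \<epsilon> T n) \<le> \<Phi>(T)\<close>. For \<open>\<epsilon> = 1/(4n)\<close> this yields
  \<open>n \<ge> T / (16 \<Phi>(T))\<close> as soon as \<open>\<Phi>(T) \<le> T/4\<close> (using \<open>K \<ge> 2\<close> only to get \<open>\<Phi> \<ge> 1/8\<close>), and the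
  decomposition \<open>R_T = \<Sigma>_a \<Delta>_a E N_a(T)\<close> concludes.
\<close>

lemma (in prob_space) integral_pair_fst:
  fixes g :: "'a \<Rightarrow> real"
  assumes "g \<in> borel_measurable N"
  shows "(\<integral>z. g (fst z) \<partial>(N \<Otimes>\<^sub>M M)) = (\<integral>x. g x \<partial>N)"
proof -
  have "(\<integral>x. g x \<partial>N) = (\<integral>x. g x \<partial>distr (N \<Otimes>\<^sub>M M) N fst)"
    by (simp add: distr_pair_fst)
  also have "\<dots> = (\<integral>z. g (fst z) \<partial>(N \<Otimes>\<^sub>M M))"
    using assms by (rule integral_distr[OF measurable_fst])
  finally show ?thesis ..
qed

lemma integral_abs_le_prob:
  fixes g :: "'a \<Rightarrow> real"
  assumes "prob_space N" "\<And>x. \<bar>g x\<bar> \<le> B"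
  shows "\<bar>\<integral>x. g x \<partial>N\<bar> \<le> B"
proof -
  interpret prob_space N by fact
  have "\<bar>\<integral>x. g x \<partial>N\<bar> \<le> (\<integral>x. \<bar>g x\<bar> \<partial>N)" by (rule integral_abs_bound)
  also have "\<dots> \<le> (\<integral>x. B \<partial>N)"
    using assms(2) by (intro integral_mono') (auto intro: order_trans[OF abs_ge_zero])
  also have "\<dots> = B" by (simp add: prob_space)
  finally show ?thesis .
qed

lemma (in sigma_finite_measure) nn_integral_pair_dominated:
  fixes c :: ennreal
  assumes sets: "sets N = sets B" "sets N' = sets B"
    and dom: "\<And>H. H \<in> borel_measurable B \<Longrightarrow> c * (\<integral>\<^sup>+x. H x \<partial>N) \<le> (\<integral>\<^sup>+x. H x \<partial>N')"
    and G: "G \<in> borel_measurable (B \<Otimes>\<^sub>M M)"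
  shows "c * (\<integral>\<^sup>+z. G z \<partial>(N \<Otimes>\<^sub>M M)) \<le> (\<integral>\<^sup>+z. G z \<partial>(N' \<Otimes>\<^sub>M M))"
proof -
  have G': "G \<in> borel_measurable (N \<Otimes>\<^sub>M M)" "G \<in> borel_measurable (N' \<Otimes>\<^sub>M M)"
    using G measurable_cong_sets[OF sets_pair_measure_cong[OF sets(1) refl] refl]
      measurable_cong_sets[OF sets_pair_measure_cong[OF sets(2) refl] refl]
    by blast+
  have "c * (\<integral>\<^sup>+z. G z \<partial>(N \<Otimes>\<^sub>M M)) = c * (\<integral>\<^sup>+x. (\<integral>\<^sup>+y. G (x, y) \<partial>M) \<partial>N)"
    by (simp only: nn_integral_fst[OF G'(1)])
  also have "\<dots> \<le> (\<integral>\<^sup>+x. (\<integral>\<^sup>+y. G (x, y) \<partial>M) \<partial>N')"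
    by (rule dom[OF borel_measurable_nn_integral_fst[OF G]])
  also have "\<dots> = (\<integral>\<^sup>+z. G z \<partial>(N' \<Otimes>\<^sub>M M))"
    by (simp only: nn_integral_fst[OF G'(2)])
  finally show ?thesis .
qed

lemma coeff_le_of_linear_bound:
  fixes \<alpha> \<beta> \<gamma> x\<^sub>0 :: real
  assumes "\<And>x. x\<^sub>0 \<le> x \<Longrightarrow> \<alpha> * x + \<gamma> \<le> \<beta> * x"
  shows "\<alpha> \<le> \<beta>"
proof (rule ccontr)
  assume "\<not> \<alpha> \<le> \<beta>"
  then have pos: "0 < \<alpha> - \<beta>" by simp
  define x where "x = max x\<^sub>0 ((\<bar>\<gamma>\<bar> + 1) / (\<alpha> - \<beta>))"
  have "(\<bar>\<gamma>\<bar> + 1) / (\<alpha> - \<beta>) \<le> x" unfolding x_def by simp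
  then have "\<bar>\<gamma>\<bar> + 1 \<le> (\<alpha> - \<beta>) * x" using pos by (simp add: field_simps)
  moreover have "\<alpha> * x + \<gamma> \<le> \<beta> * x" using assms unfolding x_def by simp
  ultimately show False by (simp add: algebra_simps)
qed

lemma prob_space_unif01: "prob_space unif01"
  and sets_unif01 [measurable_cong]: "sets unif01 = sets borel"
  unfolding unif01_def by (auto intro!: prob_space_uniform_measure)

lemma space_HS [simp]: "space HS = UNIV"
  unfolding HS_def by (simp add: space_PiM)

lemma measurable_HS_component [measurable]: "(\<lambda>h. h t) \<in> HS \<rightarrow>\<^sub>M borel"
  unfolding HS_def by (rule measurable_component_singleton) simp

lemma measurable_HS_observation [measurable]: "(\<lambda>h. fst (h t)) \<in> borel_measurable HS"
  using measurable_compose[OF measurable_HS_component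
      measurable_fst[of "borel :: real measure" "borel :: real measure", unfolded borel_prod]]
  by simp

lemma measurable_HS_fun_upd [measurable]:
  "(\<lambda>(h, zu). h(s := zu)) \<in> HS \<Otimes>\<^sub>M (borel \<Otimes>\<^sub>M borel) \<rightarrow>\<^sub>M HS"
  unfolding HS_def borel_prod split_beta'
  by (rule measurable_fun_upd[where J = UNIV]) auto

lemma pair_unif01_in_prob_algebra:
  assumes "N \<in> space (prob_algebra (borel :: real measure))"
  shows "N \<Otimes>\<^sub>M unif01 \<in> space (prob_algebra (borel \<Otimes>\<^sub>M borel))"
proof -
  interpret N: prob_space N using assms by (simp add: space_prob_algebra)
  interpret U: prob_space unif01 by (rule prob_space_unif01)
  interpret pair_prob_space N unif01 ..
  show ?thesis
    using assms by (simp add: space_prob_algebra prob_space_axioms sets_unif01 cong: sets_pair_measure_cong)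
qed

lemma measurable_resample_HS:
  assumes N: "N \<in> space (prob_algebra (borel \<Otimes>\<^sub>M borel))"
  shows "(\<lambda>h. distr N HS (\<lambda>zu. h(s := zu))) \<in> HS \<rightarrow>\<^sub>M prob_algebra HS"
proof (rule measurable_prob_algebraI)
  have "N \<in> space (subprob_algebra (borel \<Otimes>\<^sub>M borel))"
    using N by (auto simp: space_prob_algebra space_subprob_algebra prob_space_imp_subprob_space)
  then show "(\<lambda>h. distr N HS (\<lambda>zu. h(s := zu))) \<in> HS \<rightarrow>\<^sub>M subprob_algebra HS"
    by (intro measurable_distr2[where f = "\<lambda>h zu. h(s := zu)", OF measurable_HS_fun_upd measurable_const])
  have "prob_space N" and "sets N = sets (borel \<Otimes>\<^sub>M borel)"
    using N by (auto simp: space_prob_algebra)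
  then show "prob_space (distr N HS (\<lambda>zu. h(s := zu)))" for h
    by (intro prob_space.prob_space_distr) (auto cong: measurable_cong_sets)
qed

section \<open>Bounded distributions and mixtures with a point mass\<close>

text \<open>Observations lie in \<open>[m, M]\<close> only almost surely; clipping turns them into bounded
  functions, to which the integration lemmas for kernels apply.\<close>

definition clip :: "real \<Rightarrow> real \<Rightarrow> real \<Rightarrow> real" where
  "clip m M x = max m (min M x)"

lemma borel_measurable_clip [measurable]: "clip m M \<in> borel_measurable borel"
  unfolding clip_def by measurable

lemma abs_clip_le: "\<bar>clip m M x\<bar> \<le> \<bar>m\<bar> + \<bar>M\<bar>"
  unfolding clip_def by auto

lemma dist_in_prob_algebra: "dist_in m M N \<Longrightarrow> N \<in> space (prob_algebra borel)"
  unfolding dist_in_def by (simp add: space_prob_algebra)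

lemma AE_dist_in:
  assumes "dist_in m M N"
  shows "AE x in N. x \<in> {m..M}"
proof -
  interpret prob_space N using assms unfolding dist_in_def by auto
  show ?thesis using assms by (intro AE_prob_1) (simp add: dist_in_def)
qed

lemma dist_in_mono:
  assumes "dist_in m M N" "M \<le> M'"
  shows "dist_in m M' N"
proof -
  interpret prob_space N using assms unfolding dist_in_def by auto
  have "measure N {m..M} \<le> measure N {m..M'}"
    using assms by (intro finite_measure_mono) (auto simp: dist_in_def)
  then show ?thesis using assms prob_le_1[of "{m..M'}"] unfolding dist_in_def by auto
qed

lemma mean_eq_integral_clip:
  assumes "dist_in m M N"
  shows "mean N = (\<integral>x. clip m M x \<partial>N)"
proof -
  have "sets N = sets borel" using assms unfolding dist_in_def by auto
  then show ?thesis
    unfolding mean_def using AE_dist_in[OF assms]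
    by (intro integral_cong_AE) (auto simp: clip_def cong: measurable_cong_sets)
qed

lemma mean_dist_in:
  assumes "dist_in m M N"
  shows "mean N \<in> {m..M}"
proof -
  interpret prob_space N using assms unfolding dist_in_def by auto
  have "integrable N (clip m M)"
    using assms by (intro integrable_const_bound[where B = "\<bar>m\<bar> + \<bar>M\<bar>"])
      (auto simp: abs_clip_le dist_in_def cong: measurable_cong_sets)
  moreover have "AE x in N. clip m M x \<in> {m..M}"
    using AE_dist_in[OF assms] by eventually_elim (auto simp: clip_def)
  ultimately show ?thesis
    unfolding mean_eq_integral_clip[OF assms]
    by (auto intro: integral_ge_const integral_le_const elim: AE_mp)
qed

definition mixture :: "real \<Rightarrow> real \<Rightarrow> real measure \<Rightarrow> real measure" where
  "mixture \<epsilon> x N = measure_pmf (bernoulli_pmf \<epsilon>) \<bind> (\<lambda>b. if b then return borel x else N)"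

lemma measurable_mixture_choice:
  "N \<in> space (prob_algebra borel) \<Longrightarrow>
    (\<lambda>b. if b then return borel x else N) \<in> measure_pmf p \<rightarrow>\<^sub>M prob_algebra borel"
  by (auto simp: space_prob_algebra prob_space_return)

lemma mixture_in_prob_algebra:
  assumes "N \<in> space (prob_algebra borel)"
  shows "mixture \<epsilon> x N \<in> space (prob_algebra borel)"
proof -
  have p: "measure_pmf (bernoulli_pmf \<epsilon>) \<in> space (prob_algebra (measure_pmf (bernoulli_pmf \<epsilon>)))"
    by (simp add: space_prob_algebra measure_pmf.prob_space_axioms)
  show ?thesis
    using prob_space_bind'[OF p measurable_mixture_choice[OF assms]]
      sets_bind'[OF p measurable_mixture_choice[OF assms]]
    by (simp add: mixture_def space_prob_algebra)
qed

lemma nn_integral_mixture: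
  assumes N: "N \<in> space (prob_algebra borel)" and H: "H \<in> borel_measurable borel"
    and \<epsilon>: "0 \<le> \<epsilon>" "\<epsilon> \<le> 1"
  shows "(\<integral>\<^sup>+z. H z \<partial>mixture \<epsilon> x N) = ennreal \<epsilon> * H x + ennreal (1 - \<epsilon>) * (\<integral>\<^sup>+z. H z \<partial>N)"
  unfolding mixture_def
  using \<epsilon> H by (subst nn_integral_bind[OF H measurable_prob_algebraD[OF measurable_mixture_choice[OF N]]])
    (simp_all add: nn_integral_measure_pmf nn_integral_count_space_finite UNIV_bool nn_integral_return)

lemma integral_mixture:
  fixes g :: "real \<Rightarrow> real"
  assumes N: "N \<in> space (prob_algebra borel)" and g: "g \<in> borel_measurable borel"
    and B: "\<And>z. \<bar>g z\<bar> \<le> B" and \<epsilon>: "0 \<le> \<epsilon>" "\<epsilon> \<le> 1"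
  shows "(\<integral>z. g z \<partial>mixture \<epsilon> x N) = \<epsilon> * g x + (1 - \<epsilon>) * (\<integral>z. g z \<partial>N)"
proof -
  have "(\<integral>z. g z \<partial>mixture \<epsilon> x N) =
      (\<integral>b. (\<integral>z. g z \<partial>(if b then return borel x else N)) \<partial>measure_pmf (bernoulli_pmf \<epsilon>))"
    unfolding mixture_def
    using g B measurable_prob_algebraD[OF measurable_mixture_choice[OF N]] N
    by (intro integral_bind[where K = borel and B = B and B' = 1])
      (auto simp: space_prob_algebra prob_space.emeasure_space_1)
  also have "\<dots> = \<epsilon> * g x + (1 - \<epsilon>) * (\<integral>z. g z \<partial>N)"
    using \<epsilon> g by (simp add: integral_measure_pmf[of UNIV] UNIV_bool integral_return)
  finally show ?thesis .
qed

lemma dist_in_mixture: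
  assumes N: "dist_in m M N" and x: "M \<le> x" and \<epsilon>: "0 \<le> \<epsilon>" "\<epsilon> \<le> 1"
  shows "dist_in m x (mixture \<epsilon> x N)"
proof -
  have N': "N \<in> space (prob_algebra borel)" by (rule dist_in_prob_algebra[OF N])
  have mx: "m \<le> x" using mean_dist_in[OF N] x by simp
  interpret N: prob_space N using N unfolding dist_in_def by auto
  have "emeasure N {m..x} = 1"
    using dist_in_mono[OF N x] unfolding dist_in_def by (simp add: N.emeasure_eq_measure)
  moreover have "sets (mixture \<epsilon> x N) = sets borel" "sets N = sets borel"
    using mixture_in_prob_algebra[OF N'] N' by (auto simp: space_prob_algebra)
  ultimately have "emeasure (mixture \<epsilon> x N) {m..x} = ennreal \<epsilon> + ennreal (1 - \<epsilon>)"
    using nn_integral_mixture[OF N' borel_measurable_indicator[of "{m..x}"] \<epsilon>, of x] mx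
    by (simp add: nn_integral_indicator)
  also have "\<dots> = 1" using \<epsilon> by (simp flip: ennreal_plus)
  finally show ?thesis
    using mixture_in_prob_algebra[OF N'] unfolding dist_in_def
    by (auto simp: space_prob_algebra measure_def)
qed

lemma mean_mixture:
  assumes N: "dist_in m M N" and x: "M \<le> x" and \<epsilon>: "0 \<le> \<epsilon>" "\<epsilon> \<le> 1"
  shows "mean (mixture \<epsilon> x N) = \<epsilon> * x + (1 - \<epsilon>) * mean N"
proof -
  have "m \<le> x" using mean_dist_in[OF N] x by simp
  then show ?thesis
    unfolding mean_eq_integral_clip[OF dist_in_mixture[OF N x \<epsilon>]]
      mean_eq_integral_clip[OF dist_in_mono[OF N x]]
    by (subst integral_mixture[OF dist_in_prob_algebra[OF N] borel_measurable_clip abs_clip_le \<epsilon>])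
      (simp add: clip_def)
qed

section \<open>The law of the history\<close>

definition prob_arms :: "nat \<Rightarrow> (nat \<Rightarrow> real measure) \<Rightarrow> bool" where
  "prob_arms K \<nu> \<longleftrightarrow> (\<forall>a\<in>{1..K}. \<nu> a \<in> space (prob_algebra borel))"

lemma bandit_in_prob_arms: "bandit_in m M K \<nu> \<Longrightarrow> prob_arms K \<nu>"
  unfolding bandit_in_def prob_arms_def by (auto intro: dist_in_prob_algebra)

locale bandit_strategy =
  fixes K :: nat and \<pi> :: "nat \<Rightarrow> (nat \<Rightarrow> real \<times> real) \<Rightarrow> nat"
  assumes strategy: "strategy K \<pi>"
begin

lemma arm_range: "t \<ge> 1 \<Longrightarrow> \<pi> t h \<in> {1..K}"
  using strategy unfolding strategy_def by blast

lemma arm_prefix: "t \<ge> 1 \<Longrightarrow> (\<And>s. s < t \<Longrightarrow> h s = h' s) \<Longrightarrow> \<pi> t h = \<pi> t h'"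
  using strategy unfolding strategy_def by blast

lemma measurable_arm: "t \<ge> 1 \<Longrightarrow> \<pi> t \<in> HS \<rightarrow>\<^sub>M count_space UNIV"
  using strategy unfolding strategy_def by blast

lemma measurable_arm_range: "t \<ge> 1 \<Longrightarrow> \<pi> t \<in> HS \<rightarrow>\<^sub>M count_space {1..K}"
  unfolding measurable_count_space_eq2_countable
  using arm_range measurable_sets[OF measurable_arm, of t "{_}"] by auto

lemma borel_measurable_arm_comp: "t \<ge> 1 \<Longrightarrow> (\<lambda>h. g (\<pi> t h) :: real) \<in> borel_measurable HS"
  by (rule measurable_compose[OF measurable_arm]) auto

lemma arm_in_prob_algebra: "prob_arms K \<nu> \<Longrightarrow> t \<ge> 1 \<Longrightarrow> \<nu> (\<pi> t h) \<in> space (prob_algebra borel)"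
  using arm_range[of t h] unfolding prob_arms_def by blast

definition round_kernel ::
    "(nat \<Rightarrow> real measure) \<Rightarrow> nat \<Rightarrow> (nat \<Rightarrow> real \<times> real) \<Rightarrow> (nat \<Rightarrow> real \<times> real) measure" where
  "round_kernel \<nu> t h = distr (\<nu> (\<pi> (Suc t) h) \<Otimes>\<^sub>M unif01) HS (\<lambda>zu. h(Suc t := zu))"

lemma hist_law_Suc_kernel: "hist_law \<pi> \<nu> (Suc t) = hist_law \<pi> \<nu> t \<bind> round_kernel \<nu> t"
  by (simp add: round_kernel_def [abs_def])

lemma measurable_round_kernel:
  assumes "prob_arms K \<nu>"
  shows "round_kernel \<nu> t \<in> HS \<rightarrow>\<^sub>M prob_algebra HS"
proof -
  have "(\<lambda>h. distr (\<nu> a \<Otimes>\<^sub>M unif01) HS (\<lambda>zu. h(Suc t := zu))) \<in> HS \<rightarrow>\<^sub>M prob_algebra HS"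
    if "a \<in> {1..K}" for a
    using assms that unfolding prob_arms_def
    by (intro measurable_resample_HS pair_unif01_in_prob_algebra) blast
  then show ?thesis
    unfolding round_kernel_def [abs_def]
    by (rule measurable_compose_countable'[OF _ measurable_arm_range]) auto
qed

lemma hist_law_in_prob_algebra:
  assumes "prob_arms K \<nu>"
  shows "hist_law \<pi> \<nu> t \<in> space (prob_algebra HS)"
proof (induction t)
  case 0
  have "(\<lambda>u. (\<lambda>s. (0::real, if s = 0 then u else 0))) \<in> unif01 \<rightarrow>\<^sub>M HS"
    unfolding HS_def by (rule measurable_PiM_single') (auto cong: measurable_cong_sets)
  then show ?case
    by (simp add: space_prob_algebra prob_space.prob_space_distr[OF prob_space_unif01])
next
  case (Suc t)
  then show ?case
    unfolding hist_law_Suc_kernel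
    using prob_space_bind'[OF Suc measurable_round_kernel[OF assms]]
      sets_bind'[OF Suc measurable_round_kernel[OF assms]]
    by (simp add: space_prob_algebra)
qed

lemma prob_space_hist_law: "prob_arms K \<nu> \<Longrightarrow> prob_space (hist_law \<pi> \<nu> t)"
  and sets_hist_law: "prob_arms K \<nu> \<Longrightarrow> sets (hist_law \<pi> \<nu> t) = sets HS"
  using hist_law_in_prob_algebra[of \<nu> t] by (auto simp: space_prob_algebra)

lemma integrable_hist_law:
  fixes f :: "_ \<Rightarrow> real"
  assumes "prob_arms K \<nu>" "f \<in> borel_measurable HS" "\<And>h. \<bar>f h\<bar> \<le> B"
  shows "integrable (hist_law \<pi> \<nu> t) f"
proof -
  interpret prob_space "hist_law \<pi> \<nu> t" by (rule prob_space_hist_law[OF assms(1)])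
  show ?thesis
    using assms by (intro integrable_const_bound[where B = B])
      (auto simp: sets_hist_law cong: measurable_cong_sets)
qed

lemma measurable_fun_upd_pair:
  assumes "prob_arms K \<nu>"
  shows "(\<lambda>zu. h(s := zu)) \<in> \<nu> (\<pi> (Suc t) h) \<Otimes>\<^sub>M unif01 \<rightarrow>\<^sub>M HS"
proof -
  have "sets (\<nu> (\<pi> (Suc t) h) \<Otimes>\<^sub>M unif01) = sets (borel \<Otimes>\<^sub>M borel)"
    using pair_unif01_in_prob_algebra[OF arm_in_prob_algebra[OF assms]]
    by (simp add: space_prob_algebra)
  moreover have "(\<lambda>zu. h(s := zu)) \<in> borel \<Otimes>\<^sub>M borel \<rightarrow>\<^sub>M HS"
    using measurable_Pair2[OF measurable_HS_fun_upd, of h s] by simp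
  ultimately show ?thesis by (simp cong: measurable_cong_sets)
qed

lemma integral_hist_law_Suc:
  fixes f :: "_ \<Rightarrow> real"
  assumes \<nu>: "prob_arms K \<nu>" and f: "f \<in> borel_measurable HS" and B: "\<And>h. \<bar>f h\<bar> \<le> B"
  shows "(\<integral>h. f h \<partial>hist_law \<pi> \<nu> (Suc t)) =
    (\<integral>h. (\<integral>zu. f (h(Suc t := zu)) \<partial>(\<nu> (\<pi> (Suc t) h) \<Otimes>\<^sub>M unif01)) \<partial>hist_law \<pi> \<nu> t)"
proof -
  interpret prob_space "hist_law \<pi> \<nu> t" by (rule prob_space_hist_law[OF \<nu>])
  have "(\<integral>h. f h \<partial>hist_law \<pi> \<nu> (Suc t)) = (\<integral>h. (\<integral>y. f y \<partial>round_kernel \<nu> t h) \<partial>hist_law \<pi> \<nu> t)"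
    unfolding hist_law_Suc_kernel
    using f B measurable_prob_algebraD[OF measurable_round_kernel[OF \<nu>]]
      measurable_space[OF measurable_round_kernel[OF \<nu>]]
    by (intro integral_bind[where B = B and B' = 1 and K = HS])
      (auto simp: sets_hist_law[OF \<nu>] space_prob_algebra prob_space.emeasure_space_1
        cong: measurable_cong_sets)
  also have "\<dots> = (\<integral>h. (\<integral>zu. f (h(Suc t := zu)) \<partial>(\<nu> (\<pi> (Suc t) h) \<Otimes>\<^sub>M unif01)) \<partial>hist_law \<pi> \<nu> t)"
    unfolding round_kernel_def using f
    by (intro Bochner_Integration.integral_cong refl integral_distr measurable_fun_upd_pair[OF \<nu>])
  finally show ?thesis .
qed

lemma integral_hist_law_prefix:
  fixes f :: "_ \<Rightarrow> real"
  assumes \<nu>: "prob_arms K \<nu>" and f: "f \<in> borel_measurable HS" and B: "\<And>h. \<bar>f h\<bar> \<le> B"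
    and prefix: "\<And>h h'. (\<And>i. i \<le> s \<Longrightarrow> h i = h' i) \<Longrightarrow> f h = f h'"
    and "s \<le> T"
  shows "(\<integral>h. f h \<partial>hist_law \<pi> \<nu> T) = (\<integral>h. f h \<partial>hist_law \<pi> \<nu> s)"
  using \<open>s \<le> T\<close>
proof (induction T rule: dec_induct)
  case (step n)
  have "f (h(Suc n := zu)) = f h" for h zu
    using step by (intro prefix) auto
  moreover have "prob_space (\<nu> (\<pi> (Suc n) h) \<Otimes>\<^sub>M unif01)" for h
    using pair_unif01_in_prob_algebra[OF arm_in_prob_algebra[OF \<nu>]] by (simp add: space_prob_algebra)
  ultimately show ?case
    using step by (simp add: integral_hist_law_Suc[OF \<nu> f B] prob_space.prob_space del: hist_law.simps)
qed simp

lemma integral_observation: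
  fixes g :: "real \<Rightarrow> real"
  assumes \<nu>: "prob_arms K \<nu>" and g: "g \<in> borel_measurable borel" and B: "\<And>x. \<bar>g x\<bar> \<le> B"
    and t: "1 \<le> t" "t \<le> T"
  shows "(\<integral>h. g (fst (h t)) \<partial>hist_law \<pi> \<nu> T) = (\<integral>h. (\<integral>z. g z \<partial>\<nu> (\<pi> t h)) \<partial>hist_law \<pi> \<nu> T)"
proof -
  obtain s where s: "t = Suc s" using t by (cases t) auto
  interpret U: prob_space unif01 by (rule prob_space_unif01)
  have obs: "(\<lambda>h. g (fst (h t))) \<in> borel_measurable HS" using g by measurable
  have arm: "(\<lambda>h. (\<integral>z. g z \<partial>\<nu> (\<pi> t h))) \<in> borel_measurable HS"
    by (rule borel_measurable_arm_comp[OF t(1)])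
  have arm_bounded: "\<bar>\<integral>z. g z \<partial>\<nu> (\<pi> t h)\<bar> \<le> B" for h
    using arm_in_prob_algebra[OF \<nu> t(1), of h] B
    by (intro integral_abs_le_prob) (auto simp: space_prob_algebra)
  have arm_prefix': "(\<integral>z. g z \<partial>\<nu> (\<pi> t h)) = (\<integral>z. g z \<partial>\<nu> (\<pi> t h'))"
    if "\<And>i. i \<le> s \<Longrightarrow> h i = h' i" for h h'
    using arm_prefix[OF t(1), of h h'] that s by simp
  have "(\<integral>h. g (fst (h t)) \<partial>hist_law \<pi> \<nu> T) = (\<integral>h. g (fst (h t)) \<partial>hist_law \<pi> \<nu> t)"
    by (rule integral_hist_law_prefix[OF \<nu> obs B _ t(2)]) auto
  also have "\<dots> = (\<integral>h. (\<integral>zu. g (fst zu) \<partial>(\<nu> (\<pi> t h) \<Otimes>\<^sub>M unif01)) \<partial>hist_law \<pi> \<nu> s)"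
    unfolding s using obs s B by (subst integral_hist_law_Suc[OF \<nu>]) auto
  also have "\<dots> = (\<integral>h. (\<integral>z. g z \<partial>\<nu> (\<pi> t h)) \<partial>hist_law \<pi> \<nu> s)"
    using arm_in_prob_algebra[OF \<nu> t(1)] g
    by (intro Bochner_Integration.integral_cong refl U.integral_pair_fst)
      (auto simp: space_prob_algebra cong: measurable_cong_sets)
  also have "\<dots> = (\<integral>h. (\<integral>z. g z \<partial>\<nu> (\<pi> t h)) \<partial>hist_law \<pi> \<nu> T)"
    using t s by (intro integral_hist_law_prefix[OF \<nu> arm arm_bounded arm_prefix', symmetric]) auto
  finally show ?thesis .
qed

lemma AE_observation:
  assumes \<nu>: "bandit_in m M K \<nu>" and t: "1 \<le> t" "t \<le> T"
  shows "AE h in hist_law \<pi> \<nu> T. fst (h t) \<in> {m..M}"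
proof -
  let ?g = "indicator (- {m..M}) :: real \<Rightarrow> real"
  have g: "?g \<in> borel_measurable borel" by measurable
  have g_bounded: "\<bar>?g x\<bar> \<le> 1" for x by (auto split: split_indicator)
  have "(\<integral>z. ?g z \<partial>\<nu> (\<pi> t h)) = 0" for h
  proof -
    have "dist_in m M (\<nu> (\<pi> t h))" using \<nu> arm_range[OF t(1), of h] unfolding bandit_in_def by auto
    from AE_dist_in[OF this] show ?thesis
      by (intro integral_eq_zero_AE) (auto split: split_indicator elim: AE_mp)
  qed
  then have "(\<integral>h. ?g (fst (h t)) \<partial>hist_law \<pi> \<nu> T) = 0"
    using integral_observation[OF bandit_in_prob_arms[OF \<nu>] g g_bounded t] by simp
  moreover have "integrable (hist_law \<pi> \<nu> T) (\<lambda>h. ?g (fst (h t)))"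
    using g_bounded by (intro integrable_hist_law[OF bandit_in_prob_arms[OF \<nu>]]) measurable
  ultimately have "AE h in hist_law \<pi> \<nu> T. ?g (fst (h t)) = 0"
    by (subst (asm) integral_nonneg_eq_0_iff_AE) auto
  then show ?thesis by eventually_elim (auto split: split_indicator_asm)
qed

section \<open>Pull counts and the regret decomposition\<close>

definition pull_count :: "nat \<Rightarrow> nat \<Rightarrow> (nat \<Rightarrow> real \<times> real) \<Rightarrow> real" where
  "pull_count a T h = (\<Sum>t\<in>{1..T}. of_bool (\<pi> t h = a))"

definition expected_pulls :: "(nat \<Rightarrow> real measure) \<Rightarrow> nat \<Rightarrow> nat \<Rightarrow> real" where
  "expected_pulls \<nu> T a = (\<integral>h. pull_count a T h \<partial>hist_law \<pi> \<nu> T)"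

lemma borel_measurable_pull_count: "pull_count a T \<in> borel_measurable HS"
  unfolding pull_count_def [abs_def] by (intro borel_measurable_sum borel_measurable_arm_comp) auto

lemma pull_count_nonneg: "0 \<le> pull_count a T h"
  unfolding pull_count_def by (intro sum_nonneg) auto

lemma pull_count_le: "pull_count a T h \<le> real T"
  unfolding pull_count_def using sum_mono[of "{1..T}" "\<lambda>t. of_bool (\<pi> t h = a)" "\<lambda>_. 1 :: real"]
  by simp

lemma sum_pull_count: "(\<Sum>a\<in>{1..K}. pull_count a T h) = real T"
  unfolding pull_count_def using arm_range
  by (subst sum.swap) (simp add: of_bool_def sum.delta')

lemma sum_mean_pulled:
  "(\<Sum>t\<in>{1..T}. mean (\<nu> (\<pi> t h))) = (\<Sum>a\<in>{1..K}. mean (\<nu> a) * pull_count a T h)"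
  unfolding pull_count_def sum_distrib_left using arm_range
  by (subst sum.swap) (simp add: of_bool_def if_distrib sum.delta' cong: if_cong)

lemma integrable_pull_count: "prob_arms K \<nu> \<Longrightarrow> integrable (hist_law \<pi> \<nu> T) (pull_count a T)"
  using pull_count_nonneg pull_count_le
  by (intro integrable_hist_law[OF _ borel_measurable_pull_count, where B = "real T"]) auto

lemma expected_pulls_nonneg: "0 \<le> expected_pulls \<nu> T a"
  unfolding expected_pulls_def by (simp add: pull_count_nonneg)

lemma sum_expected_pulls:
  assumes "prob_arms K \<nu>"
  shows "(\<Sum>a\<in>{1..K}. expected_pulls \<nu> T a) = real T"
proof -
  interpret prob_space "hist_law \<pi> \<nu> T" by (rule prob_space_hist_law[OF assms])
  have "(\<Sum>a\<in>{1..K}. expected_pulls \<nu> T a) = (\<integral>h. (\<Sum>a\<in>{1..K}. pull_count a T h) \<partial>hist_law \<pi> \<nu> T)"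
    unfolding expected_pulls_def
    by (rule Bochner_Integration.integral_sum[symmetric]) (rule integrable_pull_count[OF assms])
  then show ?thesis by (simp only: sum_pull_count) (simp add: prob_space)
qed

lemma integral_clip_observation:
  assumes \<nu>: "bandit_in m M K \<nu>" and t: "1 \<le> t" "t \<le> T"
  shows "(\<integral>h. clip m M (fst (h t)) \<partial>hist_law \<pi> \<nu> T) = (\<integral>h. mean (\<nu> (\<pi> t h)) \<partial>hist_law \<pi> \<nu> T)"
proof -
  have "mean (\<nu> (\<pi> t h)) = (\<integral>z. clip m M z \<partial>\<nu> (\<pi> t h))" for h
    using \<nu> arm_range[OF t(1), of h] unfolding bandit_in_def by (auto intro: mean_eq_integral_clip)
  then show ?thesis
    using integral_observation[OF bandit_in_prob_arms[OF \<nu>] borel_measurable_clip abs_clip_le t]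
    by simp
qed

lemma expected_total_reward:
  assumes \<nu>: "bandit_in m M K \<nu>"
  shows "(\<integral>h. (\<Sum>t\<in>{1..T}. fst (h t)) \<partial>hist_law \<pi> \<nu> T) =
    (\<Sum>a\<in>{1..K}. mean (\<nu> a) * expected_pulls \<nu> T a)"
proof -
  note prob = bandit_in_prob_arms[OF \<nu>]
  have "AE h in hist_law \<pi> \<nu> T. \<forall>t\<in>{1..T}. fst (h t) \<in> {m..M}"
    using AE_observation[OF \<nu>] by (intro eventually_ball_finite) auto
  then have "AE h in hist_law \<pi> \<nu> T. (\<Sum>t\<in>{1..T}. fst (h t)) = (\<Sum>t\<in>{1..T}. clip m M (fst (h t)))"
    by eventually_elim (auto simp: clip_def intro!: sum.cong)
  then have "(\<integral>h. (\<Sum>t\<in>{1..T}. fst (h t)) \<partial>hist_law \<pi> \<nu> T) =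
      (\<integral>h. (\<Sum>t\<in>{1..T}. clip m M (fst (h t))) \<partial>hist_law \<pi> \<nu> T)"
    by (intro integral_cong_AE) (auto simp: sets_hist_law[OF prob] cong: measurable_cong_sets)
  also have "\<dots> = (\<Sum>t\<in>{1..T}. (\<integral>h. mean (\<nu> (\<pi> t h)) \<partial>hist_law \<pi> \<nu> T))"
    using abs_clip_le
    by (subst Bochner_Integration.integral_sum)
      (auto intro!: integrable_hist_law[OF prob] sum.cong integral_clip_observation[OF \<nu>])
  also have "\<dots> = (\<integral>h. (\<Sum>t\<in>{1..T}. mean (\<nu> (\<pi> t h))) \<partial>hist_law \<pi> \<nu> T)"
  proof (intro Bochner_Integration.integral_sum[symmetric] integrable_hist_law[OF prob])
    fix t h assume "t \<in> {1..T}"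
    then have "dist_in m M (\<nu> (\<pi> t h))"
      using \<nu> arm_range[of t h] unfolding bandit_in_def by auto
    then show "\<bar>mean (\<nu> (\<pi> t h))\<bar> \<le> \<bar>m\<bar> + \<bar>M\<bar>"
      using mean_dist_in by fastforce
  qed (auto intro: borel_measurable_arm_comp)
  also have "\<dots> = (\<Sum>a\<in>{1..K}. mean (\<nu> a) * expected_pulls \<nu> T a)"
    unfolding sum_mean_pulled expected_pulls_def
    using integrable_pull_count[OF prob] by simp
  finally show ?thesis .
qed

lemma regret_eq_sum_gap_expected_pulls:
  assumes \<nu>: "bandit_in m M K \<nu>"
  shows "regret K \<pi> \<nu> T = (\<Sum>a\<in>{1..K}. gap K \<nu> a * expected_pulls \<nu> T a)"
  unfolding regret_def expected_total_reward[OF \<nu>] gap_def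
    sum_expected_pulls[OF bandit_in_prob_arms[OF \<nu>], symmetric]
  by (simp add: sum_distrib_left sum_distrib_right algebra_simps flip: sum_subtractf)

section \<open>Change of measure\<close>

lemma nn_integral_hist_law_Suc:
  assumes "prob_arms K \<nu>" and "f \<in> borel_measurable HS"
  shows "(\<integral>\<^sup>+h. f h \<partial>hist_law \<pi> \<nu> (Suc t)) = (\<integral>\<^sup>+h. (\<integral>\<^sup>+y. f y \<partial>round_kernel \<nu> t h) \<partial>hist_law \<pi> \<nu> t)"
  unfolding hist_law_Suc_kernel using assms measurable_prob_algebraD[OF measurable_round_kernel]
  by (intro nn_integral_bind[where B = HS]) (auto simp: sets_hist_law cong: measurable_cong_sets)

lemma nn_integral_round_kernel:
  assumes "prob_arms K \<nu>" and "f \<in> borel_measurable HS"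
  shows "(\<integral>\<^sup>+y. f y \<partial>round_kernel \<nu> t h) = (\<integral>\<^sup>+zu. f (h(Suc t := zu)) \<partial>(\<nu> (\<pi> (Suc t) h) \<Otimes>\<^sub>M unif01))"
  unfolding round_kernel_def using assms by (intro nn_integral_distr measurable_fun_upd_pair) auto

lemma borel_measurable_nn_integral_round_kernel:
  assumes "prob_arms K \<nu>" and "f \<in> borel_measurable HS"
  shows "(\<lambda>h. \<integral>\<^sup>+y. f y \<partial>round_kernel \<nu> t h) \<in> borel_measurable HS"
  using assms by (intro measurable_compose[OF measurable_prob_algebraD[OF measurable_round_kernel]
      nn_integral_measurable_subprob_algebra])

lemma round_kernel_dominated:
  assumes \<nu>: "prob_arms K \<nu>" and \<nu>': "prob_arms K \<nu>'"
    and same: "\<And>b. b \<noteq> a \<Longrightarrow> \<nu>' b = \<nu> b"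
    and dom: "\<And>H. H \<in> borel_measurable borel \<Longrightarrow> ennreal (1 - \<epsilon>) * (\<integral>\<^sup>+z. H z \<partial>\<nu> a) \<le> (\<integral>\<^sup>+z. H z \<partial>\<nu>' a)"
    and f: "f \<in> borel_measurable HS"
  shows "ennreal (if \<pi> (Suc t) h = a then 1 - \<epsilon> else 1) * (\<integral>\<^sup>+y. f y \<partial>round_kernel \<nu> t h)
    \<le> (\<integral>\<^sup>+y. f y \<partial>round_kernel \<nu>' t h)"
proof (cases "\<pi> (Suc t) h = a")
  case True
  interpret U: prob_space unif01 by (rule prob_space_unif01)
  have "sets (\<nu> a) = sets borel" "sets (\<nu>' a) = sets borel"
    using arm_in_prob_algebra[OF \<nu>, of "Suc t" h] arm_in_prob_algebra[OF \<nu>', of "Suc t" h] True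
    by (auto simp: space_prob_algebra)
  moreover have "(\<lambda>zu. f (h(Suc t := zu))) \<in> borel_measurable (borel \<Otimes>\<^sub>M unif01)"
    using measurable_Pair2[OF measurable_HS_fun_upd, of h "Suc t"] f
    by (auto simp: sets_unif01 cong: measurable_cong_sets sets_pair_measure_cong)
  ultimately show ?thesis
    unfolding nn_integral_round_kernel[OF \<nu> f] nn_integral_round_kernel[OF \<nu>' f] True
    by (simp add: U.nn_integral_pair_dominated[OF _ _ dom])
next
  case False
  then show ?thesis by (simp add: round_kernel_def same)
qed

text \<open>\<open>(1 - \<epsilon>)^(N_a(T))\<close>: each pull of \<open>a\<close> contributes the factor by which \<open>\<nu>'_a\<close> dominates \<open>\<nu>_a\<close>.\<close>

definition likelihood_weight :: "real \<Rightarrow> nat \<Rightarrow> nat \<Rightarrow> (nat \<Rightarrow> real \<times> real) \<Rightarrow> real" where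
  "likelihood_weight \<epsilon> a T h = (\<Prod>t\<in>{1..T}. if \<pi> t h = a then 1 - \<epsilon> else 1)"

lemma borel_measurable_likelihood_weight: "likelihood_weight \<epsilon> a T \<in> borel_measurable HS"
  unfolding likelihood_weight_def [abs_def]
  by (intro borel_measurable_prod borel_measurable_arm_comp[where g = "\<lambda>b. if b = a then 1 - \<epsilon> else 1"]) auto

lemma likelihood_weight_nonneg: "\<epsilon> \<le> 1 \<Longrightarrow> 0 \<le> likelihood_weight \<epsilon> a T h"
  unfolding likelihood_weight_def by (intro prod_nonneg) auto

lemma likelihood_weight_le_1: "0 \<le> \<epsilon> \<Longrightarrow> \<epsilon> \<le> 1 \<Longrightarrow> likelihood_weight \<epsilon> a T h \<le> 1"
  unfolding likelihood_weight_def by (intro prod_le_1) auto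

lemma likelihood_weight_ge:
  assumes "0 \<le> \<epsilon>" "\<epsilon> \<le> 1"
  shows "1 - \<epsilon> * pull_count a T h \<le> likelihood_weight \<epsilon> a T h"
proof -
  have "1 - (\<Sum>t\<in>{1..T}. \<epsilon> * of_bool (\<pi> t h = a)) \<le> (\<Prod>t\<in>{1..T}. 1 - \<epsilon> * of_bool (\<pi> t h = a))"
    using assms by (intro Weierstrass_prod_ineq) auto
  also have "\<dots> = likelihood_weight \<epsilon> a T h"
    unfolding likelihood_weight_def by (intro prod.cong) auto
  finally show ?thesis
    unfolding pull_count_def sum_distrib_left .
qed

lemma likelihood_weight_Suc_fun_upd:
  "likelihood_weight \<epsilon> a (Suc t) (h(Suc t := zu)) =
    likelihood_weight \<epsilon> a t h * (if \<pi> (Suc t) h = a then 1 - \<epsilon> else 1)"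
proof -
  have "\<pi> s (h(Suc t := zu)) = \<pi> s h" if "s \<in> {1..Suc t}" for s
    using that by (intro arm_prefix) auto
  then have "likelihood_weight \<epsilon> a (Suc t) (h(Suc t := zu)) = likelihood_weight \<epsilon> a (Suc t) h"
    unfolding likelihood_weight_def by (intro prod.cong) auto
  then show ?thesis
    unfolding likelihood_weight_def by (simp add: atLeastAtMostSuc_conv mult.commute)
qed

lemma nn_integral_round_kernel_likelihood_weight:
  assumes \<nu>: "prob_arms K \<nu>" and \<epsilon>: "\<epsilon> \<le> 1" and f: "f \<in> borel_measurable HS"
  shows "(\<integral>\<^sup>+y. ennreal (likelihood_weight \<epsilon> a (Suc t) y) * f y \<partial>round_kernel \<nu> t h) =
    ennreal (likelihood_weight \<epsilon> a t h) *
      (ennreal (if \<pi> (Suc t) h = a then 1 - \<epsilon> else 1) * (\<integral>\<^sup>+y. f y \<partial>round_kernel \<nu> t h))"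
proof -
  have "(\<lambda>zu. f (h(Suc t := zu))) \<in> borel_measurable (\<nu> (\<pi> (Suc t) h) \<Otimes>\<^sub>M unif01)"
    using measurable_fun_upd_pair[OF \<nu>] f by measurable
  moreover have "0 \<le> likelihood_weight \<epsilon> a t h" "0 \<le> (if \<pi> (Suc t) h = a then 1 - \<epsilon> else 1)"
    using likelihood_weight_nonneg[OF \<epsilon>] \<epsilon> by auto
  ultimately show ?thesis
    using borel_measurable_likelihood_weight f
    by (simp add: nn_integral_round_kernel[OF \<nu>] likelihood_weight_Suc_fun_upd nn_integral_cmult
        ennreal_mult mult.assoc)
qed

lemma nn_integral_likelihood_weight_le:
  assumes \<nu>: "prob_arms K \<nu>" and \<nu>': "prob_arms K \<nu>'"
    and same: "\<And>b. b \<noteq> a \<Longrightarrow> \<nu>' b = \<nu> b"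
    and dom: "\<And>H. H \<in> borel_measurable borel \<Longrightarrow> ennreal (1 - \<epsilon>) * (\<integral>\<^sup>+z. H z \<partial>\<nu> a) \<le> (\<integral>\<^sup>+z. H z \<partial>\<nu>' a)"
    and \<epsilon>: "\<epsilon> \<le> 1"
    and f: "f \<in> borel_measurable HS"
  shows "(\<integral>\<^sup>+h. ennreal (likelihood_weight \<epsilon> a T h) * f h \<partial>hist_law \<pi> \<nu> T) \<le> (\<integral>\<^sup>+h. f h \<partial>hist_law \<pi> \<nu>' T)"
  using f
proof (induction T arbitrary: f)
  case 0
  then show ?case by (simp add: likelihood_weight_def)
next
  case (Suc T)
  note f = Suc.prems
  have "(\<integral>\<^sup>+h. ennreal (likelihood_weight \<epsilon> a (Suc T) h) * f h \<partial>hist_law \<pi> \<nu> (Suc T)) =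
      (\<integral>\<^sup>+h. ennreal (likelihood_weight \<epsilon> a T h) *
        (ennreal (if \<pi> (Suc T) h = a then 1 - \<epsilon> else 1) * (\<integral>\<^sup>+y. f y \<partial>round_kernel \<nu> T h)) \<partial>hist_law \<pi> \<nu> T)"
    using borel_measurable_likelihood_weight f
    by (simp add: nn_integral_hist_law_Suc[OF \<nu>] nn_integral_round_kernel_likelihood_weight[OF \<nu> \<epsilon> f]
        del: hist_law.simps)
  also have "\<dots> \<le> (\<integral>\<^sup>+h. ennreal (likelihood_weight \<epsilon> a T h) * (\<integral>\<^sup>+y. f y \<partial>round_kernel \<nu>' T h) \<partial>hist_law \<pi> \<nu> T)"
    by (intro nn_integral_mono mult_left_mono round_kernel_dominated[OF \<nu> \<nu>' same dom f]) auto
  also have "\<dots> \<le> (\<integral>\<^sup>+h. (\<integral>\<^sup>+y. f y \<partial>round_kernel \<nu>' T h) \<partial>hist_law \<pi> \<nu>' T)"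
    by (rule Suc.IH[OF borel_measurable_nn_integral_round_kernel[OF \<nu>' f]])
  also have "\<dots> = (\<integral>\<^sup>+h. f h \<partial>hist_law \<pi> \<nu>' (Suc T))"
    by (rule nn_integral_hist_law_Suc[OF \<nu>' f, symmetric])
  finally show ?case .
qed

lemma integral_likelihood_weight_le:
  fixes f :: "_ \<Rightarrow> real"
  assumes \<nu>: "prob_arms K \<nu>" and \<nu>': "prob_arms K \<nu>'"
    and same: "\<And>b. b \<noteq> a \<Longrightarrow> \<nu>' b = \<nu> b"
    and dom: "\<And>H. H \<in> borel_measurable borel \<Longrightarrow> ennreal (1 - \<epsilon>) * (\<integral>\<^sup>+z. H z \<partial>\<nu> a) \<le> (\<integral>\<^sup>+z. H z \<partial>\<nu>' a)"
    and \<epsilon>: "0 \<le> \<epsilon>" "\<epsilon> \<le> 1"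
    and f: "f \<in> borel_measurable HS" "\<And>h. 0 \<le> f h" "\<And>h. f h \<le> B"
  shows "(\<integral>h. likelihood_weight \<epsilon> a T h * f h \<partial>hist_law \<pi> \<nu> T) \<le> (\<integral>h. f h \<partial>hist_law \<pi> \<nu>' T)"
proof -
  have w: "0 \<le> likelihood_weight \<epsilon> a T h" "likelihood_weight \<epsilon> a T h \<le> 1" for h
    using likelihood_weight_nonneg likelihood_weight_le_1 \<epsilon> by auto
  have wf_bounded: "\<bar>likelihood_weight \<epsilon> a T h * f h\<bar> \<le> B" for h
    using mult_mono[OF w(2) f(3)] w(1) f(2)[of h] by (simp add: abs_mult)
  have "ennreal (\<integral>h. likelihood_weight \<epsilon> a T h * f h \<partial>hist_law \<pi> \<nu> T) =
      (\<integral>\<^sup>+h. ennreal (likelihood_weight \<epsilon> a T h) * ennreal (f h) \<partial>hist_law \<pi> \<nu> T)"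
    using w f(2) borel_measurable_likelihood_weight f(1) wf_bounded
    by (subst nn_integral_eq_integral[symmetric])
      (auto intro!: integrable_hist_law[OF \<nu>] nn_integral_cong simp: ennreal_mult)
  also have "\<dots> \<le> (\<integral>\<^sup>+h. ennreal (f h) \<partial>hist_law \<pi> \<nu>' T)"
    by (intro nn_integral_likelihood_weight_le[OF \<nu> \<nu>' same dom \<epsilon>(2)]
        measurable_compose[OF f(1) measurable_ennreal])
  also have "\<dots> = ennreal (\<integral>h. f h \<partial>hist_law \<pi> \<nu>' T)"
    using f by (intro nn_integral_eq_integral integrable_hist_law[OF \<nu>', where B = B]) auto
  finally show ?thesis
    using f(2) by (simp add: ennreal_le_iff integral_nonneg_AE)
qed

lemma expected_pulls_change_of_measure:
  assumes \<nu>: "prob_arms K \<nu>" and \<nu>': "prob_arms K \<nu>'"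
    and same: "\<And>b. b \<noteq> a \<Longrightarrow> \<nu>' b = \<nu> b"
    and dom: "\<And>H. H \<in> borel_measurable borel \<Longrightarrow> ennreal (1 - \<epsilon>) * (\<integral>\<^sup>+z. H z \<partial>\<nu> a) \<le> (\<integral>\<^sup>+z. H z \<partial>\<nu>' a)"
    and \<epsilon>: "0 \<le> \<epsilon>" "\<epsilon> \<le> 1"
  shows "real T - expected_pulls \<nu> T a - \<epsilon> * real T * expected_pulls \<nu> T a \<le> real T - expected_pulls \<nu>' T a"
proof -
  interpret P: prob_space "hist_law \<pi> \<nu> T" by (rule prob_space_hist_law[OF \<nu>])
  interpret P': prob_space "hist_law \<pi> \<nu>' T" by (rule prob_space_hist_law[OF \<nu>'])
  let ?c = "pull_count a T"
  have weighted_bounded: "\<bar>likelihood_weight \<epsilon> a T h * (real T - ?c h)\<bar> \<le> real T" for h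
    using mult_mono[OF likelihood_weight_le_1[OF \<epsilon>] order.refl, of "real T - ?c h" a T h]
      likelihood_weight_nonneg[OF \<epsilon>(2), of a T h] pull_count_nonneg[of a T h] pull_count_le[of a T h]
    by (simp add: abs_mult)
  have "real T - expected_pulls \<nu> T a - \<epsilon> * real T * expected_pulls \<nu> T a =
      (\<integral>h. real T - ?c h - \<epsilon> * real T * ?c h \<partial>hist_law \<pi> \<nu> T)"
    unfolding expected_pulls_def using integrable_pull_count[OF \<nu>] by (simp add: P.prob_space)
  also have "\<dots> \<le> (\<integral>h. likelihood_weight \<epsilon> a T h * (real T - ?c h) \<partial>hist_law \<pi> \<nu> T)"
  proof (intro integral_mono)
    fix h
    have "real T - ?c h - \<epsilon> * real T * ?c h \<le> (1 - \<epsilon> * ?c h) * (real T - ?c h)"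
      using \<epsilon> pull_count_nonneg[of a T h] by (simp add: algebra_simps)
    also have "\<dots> \<le> likelihood_weight \<epsilon> a T h * (real T - ?c h)"
      using likelihood_weight_ge[OF \<epsilon>] pull_count_le[of a T h] by (intro mult_right_mono) auto
    finally show "real T - ?c h - \<epsilon> * real T * ?c h \<le> likelihood_weight \<epsilon> a T h * (real T - ?c h)" .
  qed (use integrable_pull_count[OF \<nu>] borel_measurable_likelihood_weight borel_measurable_pull_count
      in \<open>auto intro!: integrable_hist_law[OF \<nu> _ weighted_bounded]\<close>)
  also have "\<dots> \<le> (\<integral>h. real T - ?c h \<partial>hist_law \<pi> \<nu>' T)"
    using borel_measurable_pull_count pull_count_nonneg pull_count_le
    by (intro integral_likelihood_weight_le[OF \<nu> \<nu>' same dom \<epsilon>, where B = "real T"]) auto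
  also have "\<dots> = real T - expected_pulls \<nu>' T a"
    unfolding expected_pulls_def using integrable_pull_count[OF \<nu>'] by (simp add: P'.prob_space)
  finally show ?thesis .
qed

lemma regret_ge_margin:
  assumes \<nu>: "bandit_in m M K \<nu>" and a: "a \<in> {1..K}" and D: "0 \<le> D"
    and margin: "\<And>b. b \<in> {1..K} \<Longrightarrow> b \<noteq> a \<Longrightarrow> mean (\<nu> b) + D \<le> mean (\<nu> a)"
  shows "D * (real T - expected_pulls \<nu> T a) \<le> regret K \<pi> \<nu> T"
proof -
  have best: "best_mean K \<nu> = mean (\<nu> a)"
    unfolding best_mean_def
  proof (rule Max_eqI)
    fix y assume "y \<in> (\<lambda>a. mean (\<nu> a)) ` {1..K}"
    then obtain b where "b \<in> {1..K}" "y = mean (\<nu> b)" by auto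
    then show "y \<le> mean (\<nu> a)" using margin[of b] D by (cases "b = a") auto
  qed (use a in auto)
  have "D * (real T - expected_pulls \<nu> T a) = (\<Sum>b\<in>{1..K} - {a}. D * expected_pulls \<nu> T b)"
    using a by (simp add: sum_expected_pulls[OF bandit_in_prob_arms[OF \<nu>], of T, symmetric]
        sum_diff1 sum_distrib_left right_diff_distrib)
  also have "\<dots> \<le> (\<Sum>b\<in>{1..K} - {a}. gap K \<nu> b * expected_pulls \<nu> T b)"
  proof (intro sum_mono mult_right_mono expected_pulls_nonneg)
    fix b assume "b \<in> {1..K} - {a}"
    then show "D \<le> gap K \<nu> b" using margin[of b] unfolding gap_def best by auto
  qed
  also have "\<dots> = regret K \<pi> \<nu> T"
    using a by (simp add: regret_eq_sum_gap_expected_pulls[OF \<nu>] sum_diff1 gap_def best)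
  finally show ?thesis .
qed

end

section \<open>Consequences of a scale-free regret bound\<close>

locale scale_free_strategy = bandit_strategy +
  fixes \<Phi> :: "nat \<Rightarrow> real"
  assumes scale_free: "scale_free_bound K \<pi> \<Phi>"
begin

lemma mixture_tradeoff:
  assumes \<nu>: "bandit_in m M K \<nu>" and mM: "m < M" and a: "a \<in> {1..K}"
    and \<epsilon>: "0 \<le> \<epsilon>" "\<epsilon> \<le> 1" and T: "T \<ge> 1"
    and x: "M \<le> x" "M \<le> \<epsilon> * x + (1 - \<epsilon>) * mean (\<nu> a)"
  shows "(\<epsilon> * x + (1 - \<epsilon>) * mean (\<nu> a) - M) *
      (real T - expected_pulls \<nu> T a - \<epsilon> * real T * expected_pulls \<nu> T a) \<le> (x - m) * \<Phi> T"
proof -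
  define \<nu>' where "\<nu>' = \<nu>(a := mixture \<epsilon> x (\<nu> a))"
  let ?D = "\<epsilon> * x + (1 - \<epsilon>) * mean (\<nu> a) - M"
  have \<nu>a: "dist_in m M (\<nu> a)" using \<nu> a unfolding bandit_in_def by auto
  have \<nu>': "bandit_in m x K \<nu>'"
    using \<nu> dist_in_mixture[OF \<nu>a x(1) \<epsilon>] dist_in_mono[OF _ x(1)]
    unfolding bandit_in_def \<nu>'_def by auto
  have "mean (\<nu>' b) + ?D \<le> mean (\<nu>' a)" if "b \<in> {1..K}" "b \<noteq> a" for b
    using mean_dist_in[of m M "\<nu> b"] \<nu> that mean_mixture[OF \<nu>a x(1) \<epsilon>]
    unfolding bandit_in_def \<nu>'_def by auto
  then have "?D * (real T - expected_pulls \<nu>' T a) \<le> regret K \<pi> \<nu>' T"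
    using x by (intro regret_ge_margin[OF \<nu>' a]) auto
  also have "\<dots> \<le> (x - m) * \<Phi> T"
    using scale_free \<nu>' mM x T unfolding scale_free_bound_def by auto
  finally have "?D * (real T - expected_pulls \<nu>' T a) \<le> (x - m) * \<Phi> T" .
  moreover have "real T - expected_pulls \<nu> T a - \<epsilon> * real T * expected_pulls \<nu> T a \<le>
      real T - expected_pulls \<nu>' T a"
    using bandit_in_prob_arms[OF \<nu>] bandit_in_prob_arms[OF \<nu>'] \<epsilon>
      nn_integral_mixture[OF dist_in_prob_algebra[OF \<nu>a] _ \<epsilon>]
    by (intro expected_pulls_change_of_measure) (auto simp: \<nu>'_def)
  ultimately show ?thesis
    using x by (meson mult_left_mono diff_ge_0_iff_ge order_trans)
qed

lemma expected_pulls_tradeoff: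
  assumes \<nu>: "bandit_in m M K \<nu>" and mM: "m < M" and a: "a \<in> {1..K}"
    and \<epsilon>: "0 < \<epsilon>" "\<epsilon> \<le> 1" and T: "T \<ge> 1"
  shows "\<epsilon> * (real T - expected_pulls \<nu> T a - \<epsilon> * real T * expected_pulls \<nu> T a) \<le> \<Phi> T"
proof (rule coeff_le_of_linear_bound)
  let ?c = "real T - expected_pulls \<nu> T a - \<epsilon> * real T * expected_pulls \<nu> T a"
  fix x assume "max M ((M - (1 - \<epsilon>) * mean (\<nu> a)) / \<epsilon>) \<le> x"
  then have "M \<le> x" "M \<le> \<epsilon> * x + (1 - \<epsilon>) * mean (\<nu> a)"
    using \<epsilon> by (auto simp: field_simps)
  from mixture_tradeoff[OF \<nu> mM a _ \<epsilon>(2) T this] \<epsilon>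
  show "\<epsilon> * ?c * x + (((1 - \<epsilon>) * mean (\<nu> a) - M) * ?c + m * \<Phi> T) \<le> \<Phi> T * x"
    by (simp add: algebra_simps)
qed

lemma scale_free_bound_ge_pulls:
  assumes \<nu>: "bandit_in m M K \<nu>" and mM: "m < M" and a: "a \<in> {1..K}" and T: "T \<ge> 1"
  shows "3 * real T / (16 * max (1/4) (expected_pulls \<nu> T a)) - 1/4 \<le> \<Phi> T"
proof -
  define n where "n = expected_pulls \<nu> T a"
  define k where "k = max (1/4) n"
  have n: "0 \<le> n" "n \<le> k" and k: "1/4 \<le> k"
    unfolding n_def k_def by (auto simp: expected_pulls_nonneg)
  have "n / (4 * k) \<le> 1/4"
    using n k by (simp add: field_simps)
  moreover have "real T * n / (16 * k\<^sup>2) \<le> real T / (16 * k)"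
    using mult_right_mono[OF n(2), of "real T"] k by (simp add: field_simps power2_eq_square)
  moreover have "1 / (4 * k) * (real T - n - 1 / (4 * k) * real T * n) =
      real T / (4 * k) - n / (4 * k) - real T * n / (16 * k\<^sup>2)"
    using k by (simp add: field_simps power2_eq_square)
  moreover have "1 / (4 * k) * (real T - n - 1 / (4 * k) * real T * n) \<le> \<Phi> T"
    unfolding n_def using k by (intro expected_pulls_tradeoff[OF \<nu> mM a _ _ T]) auto
  moreover have "3 * real T / (16 * k) = real T / (4 * k) - real T / (16 * k)"
    using k by (simp add: field_simps)
  ultimately show ?thesis unfolding k_def n_def by linarith
qed

lemma scale_free_bound_ge_one_eighth:
  assumes \<nu>: "bandit_in m M K \<nu>" and mM: "m < M" and K: "K \<ge> 2" and T: "T \<ge> 1"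
  shows "1/8 \<le> \<Phi> T"
proof -
  have "(\<Sum>a\<in>{1, 2}. expected_pulls \<nu> T a) \<le> (\<Sum>a\<in>{1..K}. expected_pulls \<nu> T a)"
    using K by (intro sum_mono2 expected_pulls_nonneg) auto
  then have two: "expected_pulls \<nu> T 1 + expected_pulls \<nu> T 2 \<le> real T"
    using sum_expected_pulls[OF bandit_in_prob_arms[OF \<nu>]] by simp
  obtain a where a: "a \<in> {1..K}" "expected_pulls \<nu> T a \<le> real T / 2"
  proof (cases "expected_pulls \<nu> T 1 \<le> real T / 2")
    case True
    then show ?thesis using that[of 1] K by auto
  next
    case False
    then show ?thesis using that[of 2] K two by auto
  qed
  have "3 / 8 \<le> 3 * real T / (16 * max (1/4) (expected_pulls \<nu> T a))"
    using a T by (simp add: field_simps)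
  with scale_free_bound_ge_pulls[OF \<nu> mM a(1) T] show ?thesis by linarith
qed

lemma expected_pulls_ge:
  assumes \<nu>: "bandit_in m M K \<nu>" and mM: "m < M" and K: "K \<ge> 2" and a: "a \<in> {1..K}"
    and T: "T \<ge> 1" and small: "\<Phi> T \<le> real T / 4"
  shows "real T / (16 * \<Phi> T) \<le> expected_pulls \<nu> T a"
proof -
  define k where "k = max (1/4) (expected_pulls \<nu> T a)"
  have \<Phi>: "1/8 \<le> \<Phi> T" by (rule scale_free_bound_ge_one_eighth[OF \<nu> mM K T])
  have bound: "3 * real T / (16 * k) - 1/4 \<le> \<Phi> T"
    unfolding k_def by (rule scale_free_bound_ge_pulls[OF \<nu> mM a T])
  have "k = expected_pulls \<nu> T a"
  proof (rule ccontr)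
    assume "k \<noteq> expected_pulls \<nu> T a"
    then have "k = 1/4" unfolding k_def by linarith
    then show False using bound small T unfolding \<open>k = 1/4\<close> by simp
  qed
  moreover have "real T / (16 * \<Phi> T) \<le> k"
  proof -
    have "3 * real T / (16 * k) \<le> 3 * \<Phi> T" using bound \<Phi> by linarith
    moreover have "0 < k" unfolding k_def by simp
    ultimately show ?thesis using \<Phi> by (simp add: field_simps)
  qed
  ultimately show ?thesis by simp
qed

lemma regret_ratio_ge:
  assumes \<nu>: "bandit_in m M K \<nu>" and mM: "m < M" and K: "K \<ge> 2"
    and T: "T \<ge> 1" and small: "\<Phi> T \<le> real T / 4"
  shows "1/16 * (\<Sum>a\<in>{1..K}. gap K \<nu> a) \<le> regret K \<pi> \<nu> T / (real T / \<Phi> T)"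
proof -
  have \<Phi>: "0 < \<Phi> T" using scale_free_bound_ge_one_eighth[OF \<nu> mM K T] by simp
  have gap: "0 \<le> gap K \<nu> a" if "a \<in> {1..K}" for a
    unfolding gap_def best_mean_def using that by (simp add: Max_ge)
  have "(\<Sum>a\<in>{1..K}. gap K \<nu> a) * (real T / (16 * \<Phi> T)) \<le> (\<Sum>a\<in>{1..K}. gap K \<nu> a * expected_pulls \<nu> T a)"
    unfolding sum_distrib_right
    by (intro sum_mono mult_left_mono expected_pulls_ge[OF \<nu> mM K _ T small] gap)
  then show ?thesis
    using \<Phi> T by (simp add: regret_eq_sum_gap_expected_pulls[OF \<nu>] field_simps)
qed

end

theorem theorem1:
  fixes K :: nat and \<pi> :: "nat \<Rightarrow> (nat \<Rightarrow> real \<times> real) \<Rightarrow> nat"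
    and \<Phi> :: "nat \<Rightarrow> real" and \<nu> :: "nat \<Rightarrow> real measure"
  assumes "K \<ge> 2"
    and "strategy K \<pi>"
    and "scale_free_bound K \<pi> \<Phi>"
    and "\<Phi> \<in> o(\<lambda>T. real T)"
    and "bandit_bounded K \<nu>"
  shows "Liminf sequentially (\<lambda>T. ereal (regret K \<pi> \<nu> T / (real T / \<Phi> T)))
           \<ge> ereal (1/16 * (\<Sum>a\<in>{1..K}. gap K \<nu> a))"
proof -
  interpret scale_free_strategy K \<pi> \<Phi>
    using assms(2,3) by unfold_locales
  obtain m M where mM: "m < M" and \<nu>: "bandit_in m M K \<nu>"
    using assms(5) unfolding bandit_bounded_def by auto
  have "eventually (\<lambda>T. norm (\<Phi> T) \<le> 1/4 * norm (real T)) at_top"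
    by (rule landau_o.smallD[OF assms(4)]) simp
  then have "eventually (\<lambda>T. ereal (1/16 * (\<Sum>a\<in>{1..K}. gap K \<nu> a))
      \<le> ereal (regret K \<pi> \<nu> T / (real T / \<Phi> T))) sequentially"
    using eventually_ge_at_top[of 1]
  proof eventually_elim
    case (elim T)
    then show ?case using regret_ratio_ge[OF \<nu> mM assms(1), of T] by simp
  qed
  then show ?thesis by (rule Liminf_bounded)
qed

end
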